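(* Let $V$ be a finite set of variables, let $D_{\mathit{ds}}$ be the causal ABA framework defined in the context, let $S$ be a complete extension of $D_{\mathit{ds}}$ and let $G(S)=(V,\{(u,v)\mid\mathit{arr}_{uv}\in S\})$. For all distinct $x,y\in V$ and all $\mathbf Z\subseteq V\setminus\{x,y\}$: if $(x\perp\!\!\!\perp y\mid\mathbf Z)\in S$ then $x$ and $y$ are d-separated given $\mathbf Z$ in $G(S)$.
   Context: ABA. An ABA framework is $D=(\mathcal L,\mathcal R,\mathcal A,\overline{\cdot})$ with sentences $\mathcal L$, rules $a_0\leftarrow a_1,\dots,a_n$ ($n\ge0$), assumptions $\mathcal A\subseteq\mathcal L$ and contrary function $\overline{\cdot}:\mathcal A\to\mathcal L$. $S\vdash q$ ($S\subseteq\mathcal A$) if there is a finite rooted labelled tree with root $q$, set of leaf labels $S$ or $S\cup\{\top\}$, and every inner node labelled by the head of a rule whose children are labelled by the distinct body elements (one child $\top$ for an empty body). $S$ attacks $T$ if some $S'\subseteq S$ derives $\overline a$ for some $a\in T$. Conflict-free: does not attack itself; $S$ defends $T$ if it attacks every attacker of $T$; admissible: conflict-free and self-defending; complete: admissible and contains every assumption set it defends. Graphs. A path is a sequence of distinct nodes with consecutive nodes adjacent; an inner node $x_i$ of $x_1\dots x_n$ is a collider if $(x_{i-1},x_i)$ and $(x_{i+1},x_i)$ are edges; descendants are nodes reachable by directed paths. For $\mathbf Z\subseteq V\setminus\{x,y\}$, an $x$-$y$-path is $\mathbf Z$-active if every collider on it is in $\mathbf Z$ or has a descendant in $\mathbf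 Z$ and every other node on it is not in $\mathbf Z$; $x,y$ are d-separated given $\mathbf Z$ if no $\mathbf Z$-active $x$-$y$-path exists. An $x$-$y$-collider-tree of a DAG $H$ is a subgraph $t$ of $H$ with an $x$-$y$-path $p_t$ in $t$ such that every node of $t$ not on $p_t$ is a descendant of a collider of $p_t$; it is $\mathbf Z$-active if $p_t$ is $\mathbf Z$-active in $(V,\text{edges of }t)$. The framework $D_{\mathit{ds}}$. Assumptions: $\mathit{arr}_{xy}$ for all ordered pairs of distinct $x,y\in V$; one $\mathit{noe}_{xy}=\mathit{noe}_{yx}$ per unordered pair; independence assumptions $(x\perp\!\!\!\perp y\mid\mathbf Z)$ for $\mathbf Z\subseteq V$, distinct $x,y\in V\setminus\mathbf Z$ (symmetric in $x,y$). Each assumption $a$ has its own distinct fresh contrary $\overline a$. Rules: (i) $\overline a\leftarrow b$ for distinct $a,b\in\{\mathit{arr}_{xy},\mathit{arr}_{yx},\mathit{noe}_{xy}\}$; (ii) for every sequence $x_1\dots x_k$ with consecutive elements distinct and $x_1=x_k$ and every $1\le i<k$: $\overline{\mathit{arr}_{x_ix_{i+1}}}\leftarrow\mathit{arr}_{x_1x_2},\dots,\mathit{arr}_{x_{k-1}x_k}$; (iii) $\mathit{dpath}_{xy}\leftarrow\mathit{arr}_{xy}$; $\mathit{dpath}_{xz}\leftarrow\mathit{dpath}_{xy},\mathit{arr}_{yz}$; $e_{xy}\leftarrow\mathit{arr}_{xy}$; $e_{xy}\leftarrow\mathit{arr}_{yx}$; $\overline{\mathit{noe}_{xy}}\leftarrow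 e_{xy}$; (iv) for all distinct $x,y$, $\mathbf Z\subseteq V\setminus\{x,y\}$ and every $\mathbf Z$-active $x$-$y$-collider-tree $t$ (of any DAG on $V$), $\overline{(x\perp\!\!\!\perp y\mid\mathbf Z)}\leftarrow\{\mathit{arr}_{uv}\mid(u,v)\text{ an edge of }t\}$. *)

theory Defs
  imports Main
begin

text \<open>An ABA framework is given by a set of rules R (pairs of head and body; the body
  of a rule a0 <- a1,...,an is the set of its body elements, since the children of a node
  are labelled by the distinct body elements), a set of assumptions A and a contrary
  function ctr.  Sentences are the elements of the type.\<close>

text \<open>derives R A S q: there is a finite derivation tree for q whose set of assumption
  leaves is exactly S (leaves labelled by top, coming from empty bodies, are not recorded).\<close>

inductive derives :: "('s \<times> 's set) set \<Rightarrow> 's set \<Rightarrow> 's set \<Rightarrow> 's \<Rightarrow> bool"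
  for R :: "('s \<times> 's set) set" and A :: "'s set" where
  asm:  "a \<in> A \<Longrightarrow> derives R A {a} a"
| rule: "(h, B) \<in> R \<Longrightarrow> finite B \<Longrightarrow> (\<forall>b\<in>B. derives R A (f b) b)
         \<Longrightarrow> derives R A (\<Union>b\<in>B. f b) h"

definition attacks :: "('s \<times> 's set) set \<Rightarrow> 's set \<Rightarrow> ('s \<Rightarrow> 's) \<Rightarrow> 's set \<Rightarrow> 's set \<Rightarrow> bool" where
  "attacks R A ctr S T \<longleftrightarrow> (\<exists>a\<in>T. \<exists>S'\<subseteq>S. derives R A S' (ctr a))"

definition conflict_free :: "('s \<times> 's set) set \<Rightarrow> 's set \<Rightarrow> ('s \<Rightarrow> 's) \<Rightarrow> 's set \<Rightarrow> bool" where
  "conflict_free R A ctr S \<longleftrightarrow> \<not> attacks R A ctr S S"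

definition defends :: "('s \<times> 's set) set \<Rightarrow> 's set \<Rightarrow> ('s \<Rightarrow> 's) \<Rightarrow> 's set \<Rightarrow> 's set \<Rightarrow> bool" where
  "defends R A ctr S T \<longleftrightarrow> (\<forall>U\<subseteq>A. attacks R A ctr U T \<longrightarrow> attacks R A ctr S U)"

definition admissible :: "('s \<times> 's set) set \<Rightarrow> 's set \<Rightarrow> ('s \<Rightarrow> 's) \<Rightarrow> 's set \<Rightarrow> bool" where
  "admissible R A ctr S \<longleftrightarrow> S \<subseteq> A \<and> conflict_free R A ctr S \<and> defends R A ctr S S"

definition complete :: "('s \<times> 's set) set \<Rightarrow> 's set \<Rightarrow> ('s \<Rightarrow> 's) \<Rightarrow> 's set \<Rightarrow> bool" where
  "complete R A ctr S \<longleftrightarrow> admissible R A ctr S \<and>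
     (\<forall>T\<subseteq>A. defends R A ctr S T \<longrightarrow> T \<subseteq> S)"

definition adjacent :: "('v \<times> 'v) set \<Rightarrow> 'v \<Rightarrow> 'v \<Rightarrow> bool" where
  "adjacent E a b \<longleftrightarrow> (a, b) \<in> E \<or> (b, a) \<in> E"

definition is_path :: "'v set \<Rightarrow> ('v \<times> 'v) set \<Rightarrow> 'v list \<Rightarrow> bool" where
  "is_path Vs E p \<longleftrightarrow> p \<noteq> [] \<and> set p \<subseteq> Vs \<and> distinct p \<and>
     (\<forall>i. Suc i < length p \<longrightarrow> adjacent E (p ! i) (p ! Suc i))"

definition is_xy_path :: "'v set \<Rightarrow> ('v \<times> 'v) set \<Rightarrow> 'v \<Rightarrow> 'v \<Rightarrow> 'v list \<Rightarrow> bool" where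
  "is_xy_path Vs E x y p \<longleftrightarrow> is_path Vs E p \<and> hd p = x \<and> last p = y"

definition collider :: "('v \<times> 'v) set \<Rightarrow> 'v list \<Rightarrow> nat \<Rightarrow> bool" where
  "collider E p i \<longleftrightarrow> 0 < i \<and> Suc i < length p \<and>
     (p ! (i - 1), p ! i) \<in> E \<and> (p ! Suc i, p ! i) \<in> E"

definition descendant :: "('v \<times> 'v) set \<Rightarrow> 'v \<Rightarrow> 'v \<Rightarrow> bool" where
  "descendant E v w \<longleftrightarrow> (v, w) \<in> E\<^sup>*"

definition active :: "('v \<times> 'v) set \<Rightarrow> 'v set \<Rightarrow> 'v list \<Rightarrow> bool" where
  "active E Z p \<longleftrightarrow> (\<forall>i < length p.
     (collider E p i \<longrightarrow> (p ! i \<in> Z \<or> (\<exists>w\<in>Z. descendant E (p ! i) w))) \<and>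
     (\<not> collider E p i \<longrightarrow> p ! i \<notin> Z))"

definition d_separated :: "'v set \<Rightarrow> ('v \<times> 'v) set \<Rightarrow> 'v set \<Rightarrow> 'v \<Rightarrow> 'v \<Rightarrow> bool" where
  "d_separated Vs E Z x y \<longleftrightarrow> \<not> (\<exists>p. is_xy_path Vs E x y p \<and> active E Z p)"

definition is_dag :: "'v set \<Rightarrow> ('v \<times> 'v) set \<Rightarrow> bool" where
  "is_dag Vs H \<longleftrightarrow> H \<subseteq> Vs \<times> Vs \<and> acyclic H"

text \<open>An x-y-collider-tree of the DAG H, represented by its edge set Et together with its
  distinguished x-y-path p (its nodes are the nodes of p and the endpoints of edges in Et):
  every node of t not on p is a descendant (in t) of a collider of p.\<close>
definition collider_tree :: "'v set \<Rightarrow> ('v \<times> 'v) set \<Rightarrow> 'v \<Rightarrow> 'v \<Rightarrow> ('v \<times> 'v) set \<Rightarrow> 'v list \<Rightarrow> bool" where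
  "collider_tree Vs H x y Et p \<longleftrightarrow> Et \<subseteq> H \<and> is_xy_path Vs Et x y p \<and>
     (\<forall>(u, v) \<in> Et. \<forall>w \<in> {u, v}. w \<notin> set p \<longrightarrow>
        (\<exists>i. collider Et p i \<and> descendant Et (p ! i) w))"

definition active_collider_tree :: "'v set \<Rightarrow> ('v \<times> 'v) set \<Rightarrow> 'v set \<Rightarrow> 'v \<Rightarrow> 'v \<Rightarrow> ('v \<times> 'v) set \<Rightarrow> bool" where
  "active_collider_tree Vs H Z x y Et \<longleftrightarrow> (\<exists>p. collider_tree Vs H x y Et p \<and> active Et Z p)"

text \<open>Sentences.  Noe and independence assumptions are indexed by the unordered pair {x,y},
  so that noe_xy = noe_yx and (x indep y | Z) = (y indep x | Z).  Ctr a is the (fresh,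
  distinct) contrary of a.\<close>
datatype 'v sent =
    Arr 'v 'v
  | Noe "'v set"
  | Indep "'v set" "'v set"
  | Dpath 'v 'v
  | Edge 'v 'v
  | Ctr "'v sent"

definition ds_asms :: "'v set \<Rightarrow> 'v sent set" where
  "ds_asms V =
     {Arr x y | x y. x \<in> V \<and> y \<in> V \<and> x \<noteq> y} \<union>
     {Noe {x, y} | x y. x \<in> V \<and> y \<in> V \<and> x \<noteq> y} \<union>
     {Indep {x, y} Z | x y Z. Z \<subseteq> V \<and> x \<in> V - Z \<and> y \<in> V - Z \<and> x \<noteq> y}"

definition ds_rules :: "'v set \<Rightarrow> ('v sent \<times> 'v sent set) set" where
  "ds_rules V =
     \<comment> \<open>(i)\<close>
     {(Ctr a, {b}) | a b x y. x \<in> V \<and> y \<in> V \<and> x \<noteq> y \<and>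
        a \<in> {Arr x y, Arr y x, Noe {x, y}} \<and> b \<in> {Arr x y, Arr y x, Noe {x, y}} \<and> a \<noteq> b} \<union>
     \<comment> \<open>(ii) cycles x_1 ... x_k with x_1 = x_k (list indices 0 .. k-1)\<close>
     {(Ctr (Arr (xs ! i) (xs ! Suc i)), {Arr (xs ! j) (xs ! Suc j) | j. Suc j < length xs})
        | xs i. set xs \<subseteq> V \<and> 2 \<le> length xs \<and> hd xs = last xs \<and>
          (\<forall>j. Suc j < length xs \<longrightarrow> xs ! j \<noteq> xs ! Suc j) \<and> Suc i < length xs} \<union>
     \<comment> \<open>(iii)\<close>
     {(Dpath x y, {Arr x y}) | x y. x \<in> V \<and> y \<in> V} \<union>
     {(Dpath x z, {Dpath x y, Arr y z}) | x y z. x \<in> V \<and> y \<in> V \<and> z \<in> V} \<union>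
     {(Edge x y, {Arr x y}) | x y. x \<in> V \<and> y \<in> V} \<union>
     {(Edge x y, {Arr y x}) | x y. x \<in> V \<and> y \<in> V} \<union>
     {(Ctr (Noe {x, y}), {Edge x y}) | x y. x \<in> V \<and> y \<in> V \<and> x \<noteq> y} \<union>
     \<comment> \<open>(iv)\<close>
     {(Ctr (Indep {x, y} Z), {Arr u v | u v. (u, v) \<in> Et})
        | x y Z Et. x \<in> V \<and> y \<in> V \<and> x \<noteq> y \<and> Z \<subseteq> V - {x, y} \<and>
          (\<exists>H. is_dag V H \<and> active_collider_tree V H Z x y Et)}"

text \<open>The graph G(S) = (V, {(u,v) | arr_uv in S}); its node set is V.\<close>
definition graph_of :: "'v sent set \<Rightarrow> ('v \<times> 'v) set" where
  "graph_of S = {(u, v). Arr u v \<in> S}"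

end

theory Submission
  imports Defs
begin

text \<open>A complete extension S is conflict-free, so no rule whose body consists of assumptions
  of S may conclude the contrary of an assumption of S.  The cycle rules (ii) therefore make
  G(S) acyclic, i.e. a DAG on V.  If some x-y-path were Z-active in G(S), the edges of G(S)
  between its nodes together with all edges on directed paths from its colliders into Z would
  form a Z-active x-y-collider-tree of that DAG; by rule (iv) its arrows, all in S, would
  derive the contrary of the independence assumption in S.\<close>

lemma derives_rule_body:
  assumes "(h, B) \<in> R" "finite B" "B \<subseteq> A"
  shows "derives R A B h"
proof -
  have "derives R A (\<Union>b\<in>B. {b}) h"
    using assms by (intro derives.rule) (auto intro: derives.asm)
  then show ?thesis by simp
qed

lemma conflict_free_rule_body_not_subset:
  assumes "conflict_free R A ctr S" "S \<subseteq> A"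
    and "(ctr a, B) \<in> R" "finite B" "a \<in> S"
  shows "\<not> B \<subseteq> S"
proof
  assume "B \<subseteq> S"
  then have "derives R A B (ctr a)"
    using assms(2-4) by (intro derives_rule_body) auto
  with \<open>B \<subseteq> S\<close> \<open>a \<in> S\<close> show False
    using assms(1) unfolding conflict_free_def attacks_def by blast
qed

lemma graph_of_edge:
  assumes "S \<subseteq> ds_asms V" "(u, v) \<in> graph_of S"
  shows "u \<in> V" "v \<in> V" "u \<noteq> v"
  using assms unfolding graph_of_def ds_asms_def by auto

lemma cycle_rule_in_ds_rules:
  assumes "set xs \<subseteq> V" "2 \<le> length xs" "hd xs = last xs"
    and "\<And>j. Suc j < length xs \<Longrightarrow> xs ! j \<noteq> xs ! Suc j"
  shows "(Ctr (Arr (xs ! 0) (xs ! 1)), {Arr (xs ! j) (xs ! Suc j) | j. Suc j < length xs})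
           \<in> ds_rules V"
  unfolding ds_rules_def using assms
  by (intro UnI1 UnI2 CollectI exI[of _ xs] exI[of _ 0]) auto

lemma acyclic_graph_of:
  assumes "conflict_free (ds_rules V) (ds_asms V) Ctr S" "S \<subseteq> ds_asms V"
  shows "acyclic (graph_of S)"
proof (rule acyclicI, intro allI notI)
  fix a assume "(a, a) \<in> (graph_of S)\<^sup>+"
  then obtain n f where "n > 0" "f 0 = a" "f n = a"
    and step: "\<And>i. i < n \<Longrightarrow> (f i, f (Suc i)) \<in> graph_of S"
    unfolding trancl_power relpow_fun_conv by blast
  define xs where "xs = map f [0..<Suc n]"
  have len: "length xs = Suc n" and nth: "\<And>j. j < Suc n \<Longrightarrow> xs ! j = f j"
    unfolding xs_def by (simp_all del: upt_Suc)
  have "f j \<in> V" if "j \<le> n" for j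
  proof (cases "j < n")
    case True
    then show ?thesis using graph_of_edge(1)[OF assms(2) step] by blast
  next
    case False
    then show ?thesis
      using that \<open>n > 0\<close> \<open>f 0 = a\<close> \<open>f n = a\<close> graph_of_edge(1)[OF assms(2) step[of 0]] by auto
  qed
  then have "set xs \<subseteq> V" unfolding xs_def by auto
  moreover have "hd xs = last xs"
    using \<open>f 0 = a\<close> \<open>f n = a\<close> unfolding xs_def by (simp add: hd_map last_map del: upt_Suc)
  moreover have "xs ! j \<noteq> xs ! Suc j" if "Suc j < length xs" for j
    using that graph_of_edge(3)[OF assms(2) step[of j]] by (simp add: len nth)
  ultimately have rule: "(Ctr (Arr (xs ! 0) (xs ! 1)),
      {Arr (xs ! j) (xs ! Suc j) | j. Suc j < length xs}) \<in> ds_rules V"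
    using \<open>n > 0\<close> len by (intro cycle_rule_in_ds_rules) auto
  have body: "{Arr (xs ! j) (xs ! Suc j) | j. Suc j < length xs} \<subseteq> S"
    using step by (auto simp: len nth graph_of_def)
  moreover have "finite {Arr (xs ! j) (xs ! Suc j) | j. Suc j < length xs}"
    by (simp add: setcompr_eq_image len)
  moreover have "Arr (xs ! 0) (xs ! 1) \<in> S"
    using body \<open>n > 0\<close> len by auto
  ultimately show False
    using conflict_free_rule_body_not_subset[OF assms rule] by blast
qed

lemma is_dag_graph_of:
  assumes "conflict_free (ds_rules V) (ds_asms V) Ctr S" "S \<subseteq> ds_asms V"
  shows "is_dag V (graph_of S)"
  using acyclic_graph_of[OF assms] graph_of_edge[OF assms(2)] unfolding is_dag_def by auto

definition walk_edges :: "('v \<times> 'v) set \<Rightarrow> 'v \<Rightarrow> 'v \<Rightarrow> ('v \<times> 'v) set" where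
  "walk_edges E c w = {(u, v) \<in> E. (c, u) \<in> E\<^sup>* \<and> (v, w) \<in> E\<^sup>*}"

lemma rtrancl_walk_edges:
  assumes "(c, a) \<in> E\<^sup>*" "(a, w) \<in> E\<^sup>*"
  shows "(c, a) \<in> (walk_edges E c w)\<^sup>*"
  using assms
proof (induction rule: rtrancl_induct)
  case (step u v)
  then have "(u, v) \<in> walk_edges E c w" and "(c, u) \<in> (walk_edges E c w)\<^sup>*"
    unfolding walk_edges_def by (auto intro: converse_rtrancl_into_rtrancl)
  then show ?case by (rule rtrancl_into_rtrancl[rotated])
qed simp

lemma walk_edges_reachable:
  assumes "(u, v) \<in> walk_edges E c w"
  shows "(c, u) \<in> (walk_edges E c w)\<^sup>*" "(c, v) \<in> (walk_edges E c w)\<^sup>*"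
proof -
  from assms have "(c, u) \<in> E\<^sup>*" "(u, w) \<in> E\<^sup>*"
    unfolding walk_edges_def by (auto intro: converse_rtrancl_into_rtrancl)
  then show "(c, u) \<in> (walk_edges E c w)\<^sup>*" by (rule rtrancl_walk_edges)
  with assms show "(c, v) \<in> (walk_edges E c w)\<^sup>*" by (rule rtrancl_into_rtrancl[rotated])
qed

lemma collider_subgraph:
  assumes "E \<inter> set p \<times> set p \<subseteq> Et" "Et \<subseteq> E"
  shows "collider Et p i \<longleftrightarrow> collider E p i"
proof
  assume "collider E p i"
  then have "i - 1 < length p" "Suc i < length p" unfolding collider_def by auto
  with \<open>collider E p i\<close> show "collider Et p i"
    using assms(1) unfolding collider_def by (auto dest: nth_mem)
qed (use assms(2) in \<open>auto simp: collider_def\<close>)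

lemma is_xy_path_subgraph:
  assumes "is_xy_path Vs E x y p" "E \<inter> set p \<times> set p \<subseteq> Et"
  shows "is_xy_path Vs Et x y p"
  using assms unfolding is_xy_path_def is_path_def adjacent_def
  by (fastforce dest: nth_mem)

lemma active_path_imp_collider_tree:
  assumes path: "is_xy_path Vs E x y p" and act: "active E Z p"
  obtains Et where "collider_tree Vs E x y Et p" "active Et Z p"
proof
  define W where "W = (\<Union>i \<in> {i. collider E p i}. \<Union>z \<in> Z. walk_edges E (p ! i) z)"
  define Et where "Et = E \<inter> set p \<times> set p \<union> W"
  have "Et \<subseteq> E" unfolding Et_def W_def walk_edges_def by blast
  have "E \<inter> set p \<times> set p \<subseteq> Et" unfolding Et_def by blast
  note coll = collider_subgraph[OF this \<open>Et \<subseteq> E\<close>]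
  have W_mono: "(walk_edges E (p ! i) z)\<^sup>* \<subseteq> Et\<^sup>*" if "collider E p i" "z \<in> Z" for i z
    using that by (intro rtrancl_mono) (auto simp: Et_def W_def)
  show "active Et Z p"
    unfolding active_def
  proof (intro allI impI conjI)
    fix i assume "i < length p" "collider Et p i"
    then have "collider E p i" "p ! i \<in> Z \<or> (\<exists>z\<in>Z. (p ! i, z) \<in> E\<^sup>*)"
      using act coll unfolding active_def descendant_def by auto
    moreover have "(p ! i, z) \<in> Et\<^sup>*" if "z \<in> Z" "(p ! i, z) \<in> E\<^sup>*" for z
      using W_mono[OF \<open>collider E p i\<close> that(1)] rtrancl_walk_edges[OF that(2) rtrancl_refl]
      by blast
    ultimately show "p ! i \<in> Z \<or> (\<exists>z\<in>Z. descendant Et (p ! i) z)"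
      unfolding descendant_def by blast
  next
    fix i assume "i < length p" "\<not> collider Et p i"
    then show "p ! i \<notin> Z" using act coll unfolding active_def by simp
  qed
  have "\<exists>i. collider Et p i \<and> descendant Et (p ! i) w"
    if "(u, v) \<in> Et" "w \<in> {u, v}" "w \<notin> set p" for u v w
  proof -
    from that obtain i z where "collider E p i" "z \<in> Z" "(u, v) \<in> walk_edges E (p ! i) z"
      unfolding Et_def W_def by blast
    moreover from this have "(p ! i, w) \<in> (walk_edges E (p ! i) z)\<^sup>*"
      using walk_edges_reachable that(2) by auto
    ultimately show ?thesis
      using W_mono coll unfolding descendant_def by blast
  qed
  then show "collider_tree Vs E x y Et p"
    using \<open>Et \<subseteq> E\<close> is_xy_path_subgraph[OF path \<open>E \<inter> set p \<times> set p \<subseteq> Et\<close>]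
    unfolding collider_tree_def by blast
qed

lemma indep_rule_in_ds_rules:
  assumes "x \<in> V" "y \<in> V" "x \<noteq> y" "Z \<subseteq> V - {x, y}"
    and "is_dag V H" "active_collider_tree V H Z x y Et"
  shows "(Ctr (Indep {x, y} Z), {Arr u v | u v. (u, v) \<in> Et}) \<in> ds_rules V"
  unfolding ds_rules_def using assms by (intro UnI2) blast

theorem proposition3:
  fixes V :: "'v set" and S :: "'v sent set" and x y :: 'v and Z :: "'v set"
  assumes "finite V"
    and "complete (ds_rules V) (ds_asms V) Ctr S"
    and "x \<in> V" and "y \<in> V" and "x \<noteq> y" and "Z \<subseteq> V - {x, y}"
    and "Indep {x, y} Z \<in> S"
  shows "d_separated V (graph_of S) Z x y"
  unfolding d_separated_def
proof
  from assms(2) have cf: "conflict_free (ds_rules V) (ds_asms V) Ctr S" and "S \<subseteq> ds_asms V"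
    unfolding complete_def admissible_def by auto
  note dag = is_dag_graph_of[OF this]
  assume "\<exists>p. is_xy_path V (graph_of S) x y p \<and> active (graph_of S) Z p"
  then obtain p Et where "collider_tree V (graph_of S) x y Et p" "active Et Z p"
    by (blast elim: active_path_imp_collider_tree)
  then have rule: "(Ctr (Indep {x, y} Z), {Arr u v | u v. (u, v) \<in> Et}) \<in> ds_rules V"
    and "Et \<subseteq> graph_of S"
    using indep_rule_in_ds_rules[OF assms(3-6) dag]
    unfolding active_collider_tree_def collider_tree_def by blast+
  then have "finite Et"
    using dag \<open>finite V\<close> unfolding is_dag_def by (meson finite_SigmaI finite_subset)
  moreover have "{Arr u v | u v. (u, v) \<in> Et} = case_prod Arr ` Et" by auto
  ultimately have "finite {Arr u v | u v. (u, v) \<in> Et}" by simp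
  moreover have "{Arr u v | u v. (u, v) \<in> Et} \<subseteq> S"
    using \<open>Et \<subseteq> graph_of S\<close> unfolding graph_of_def by blast
  ultimately show False
    using conflict_free_rule_body_not_subset[OF cf \<open>S \<subseteq> ds_asms V\<close> rule] assms(7) by blast
qed

end
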